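(* Let $d\ge1$, $\lambda,R,B>0$, let $(x_s,y_s)_{s\ge1}$ satisfy $\|x_s\|\le R$, $y_s\in\{-1,1\}$, let $t\ge1$, and let $\Omega_t$ and its minimizer $\omega_t\in\mathbb R^{p_t}$ be as defined in the context. Let $\epsilon,\gamma>0$, $T\in\mathbb N$, and define $\omega_t^0=0$ and $\omega_t^i=\omega_t^{i-1}-\gamma\nabla\Omega_t(\omega_t^{i-1})$ for $i=1,\dots,T$. If \[\gamma=\frac{\lambda}{4\lambda+R^2},\qquad T\ge\left(4+\frac{R^2}{\lambda}\right)\log\frac{Rt}{\epsilon\sqrt\lambda},\] then $\|\omega_t^T-\omega_t\|\le\epsilon$.
   Context: Logistic loss $\ell(z,y)=\log(1+e^{-yz})$, $\ell_s(\theta)=\ell(\theta^\top x_s,y_s)$. Let $\hat\theta_s$ be the AIOLI forecasts: for $s<t$, $g_s=\nabla\ell_s(\hat\theta_s)$, $\eta_s=e^{y_s\hat\theta_s^\top x_s}/(1+BR)$, $\hat\ell_s(\theta)=\ell_s(\hat\theta_s)+g_s^\top(\theta-\hat\theta_s)+\frac{\eta_s}{2}(\theta-\hat\theta_s)^\top g_sg_s^\top(\theta-\hat\theta_s)$, and $\hat\theta_t=\arg\min_\theta\{\sum_{s<t}\hat\ell_s(\theta)+\ell(\theta^\top x_t,1)+\ell(\theta^\top x_t,-1)+\lambda\|\theta\|^2\}$. Let $A_{t-1}=\lambda I+\frac12\sum_{s=1}^{t-1}\eta_sg_sg_s^\top$, $b_{t-1}=\frac12\sum_{s=1}^{t-1}(\eta_sg_s^\top\hat\theta_s-1)g_s$,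 $L_{t-1}$ the lower-triangular Cholesky factor of $A_{t-1}$, $W_t=L_{t-1}^{-1}(b_{t-1},x_t)\in\mathbb R^{d\times2}$ of rank $p_t\in\{1,2\}$, $W_t^\top W_t=U_t\Sigma_tU_t^\top$ its economic eigendecomposition ($U_t\in\mathbb R^{2\times p_t}$ with orthonormal columns, $\Sigma_t$ positive diagonal), $u_t=\Sigma_t^{1/2}U_t^\top e_1$, $v_t=\Sigma_t^{1/2}U_t^\top e_2$ with $e_1=(1,0),e_2=(0,1)$, and \[\Omega_t(\omega)=\|\omega\|^2-2u_t^\top\omega+\log(1+e^{-v_t^\top\omega})+\log(1+e^{v_t^\top\omega}),\quad\omega\in\mathbb R^{p_t},\] with unique minimizer $\omega_t$. *)

theory Defs
  imports "HOL-Analysis.Analysis"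
begin

definition grad :: "('a::real_inner \<Rightarrow> real) \<Rightarrow> 'a \<Rightarrow> 'a" where
  "grad f x = (THE D. GDERIV f x :> D)"

definition argmin :: "('a \<Rightarrow> real) \<Rightarrow> 'a" where
  "argmin f = (THE z. \<forall>w. f z \<le> f w)"

definition logloss :: "real \<Rightarrow> real \<Rightarrow> real" where
  "logloss z y = ln (1 + exp (- y * z))"

definition outer :: "real^'n \<Rightarrow> real^'n \<Rightarrow> real^'n^'n" where
  "outer g h = (\<chi> i j. g $ i * h $ j)"

definition aioli_g :: "(nat \<Rightarrow> real^'n) \<Rightarrow> (nat \<Rightarrow> real) \<Rightarrow> (nat \<Rightarrow> real^'n) \<Rightarrow> nat \<Rightarrow> real^'n" where
  "aioli_g x y th s = grad (\<lambda>\<theta>. logloss (\<theta> \<bullet> x s) (y s)) (th s)"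

definition aioli_eta :: "real \<Rightarrow> real \<Rightarrow> (nat \<Rightarrow> real^'n) \<Rightarrow> (nat \<Rightarrow> real) \<Rightarrow> (nat \<Rightarrow> real^'n) \<Rightarrow> nat \<Rightarrow> real" where
  "aioli_eta B R x y th s = exp (y s * (th s \<bullet> x s)) / (1 + B * R)"

definition aioli_surr :: "real \<Rightarrow> real \<Rightarrow> (nat \<Rightarrow> real^'n) \<Rightarrow> (nat \<Rightarrow> real) \<Rightarrow> (nat \<Rightarrow> real^'n) \<Rightarrow> nat \<Rightarrow> real^'n \<Rightarrow> real" where
  "aioli_surr B R x y th s \<theta> =
     logloss (th s \<bullet> x s) (y s) + aioli_g x y th s \<bullet> (\<theta> - th s)
     + aioli_eta B R x y th s / 2 * ((\<theta> - th s) \<bullet> aioli_g x y th s)^2"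

definition is_aioli_forecasts :: "real \<Rightarrow> real \<Rightarrow> real \<Rightarrow> (nat \<Rightarrow> real^'n) \<Rightarrow> (nat \<Rightarrow> real) \<Rightarrow> (nat \<Rightarrow> real^'n) \<Rightarrow> bool" where
  "is_aioli_forecasts lam B R x y th \<longleftrightarrow>
     (\<forall>t\<ge>1. th t = argmin (\<lambda>\<theta>. (\<Sum>s\<in>{1..<t}. aioli_surr B R x y th s \<theta>)
                               + logloss (\<theta> \<bullet> x t) 1 + logloss (\<theta> \<bullet> x t) (-1)
                               + lam * (norm \<theta>)^2))"

definition aioli_A :: "real \<Rightarrow> real \<Rightarrow> real \<Rightarrow> (nat \<Rightarrow> real^'n) \<Rightarrow> (nat \<Rightarrow> real) \<Rightarrow> (nat \<Rightarrow> real^'n) \<Rightarrow> nat \<Rightarrow> real^'n^'n" where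
  "aioli_A lam B R x y th t = lam *\<^sub>R mat 1
     + (1/2) *\<^sub>R (\<Sum>s\<in>{1..<t}. aioli_eta B R x y th s *\<^sub>R outer (aioli_g x y th s) (aioli_g x y th s))"

definition aioli_b :: "real \<Rightarrow> real \<Rightarrow> (nat \<Rightarrow> real^'n) \<Rightarrow> (nat \<Rightarrow> real) \<Rightarrow> (nat \<Rightarrow> real^'n) \<Rightarrow> nat \<Rightarrow> real^'n" where
  "aioli_b B R x y th t = (1/2) *\<^sub>R
     (\<Sum>s\<in>{1..<t}. (aioli_eta B R x y th s * (aioli_g x y th s \<bullet> th s) - 1) *\<^sub>R aioli_g x y th s)"

definition lower_triangular :: "real^('n::{finite,wellorder})^('n::{finite,wellorder}) \<Rightarrow> bool" where
  "lower_triangular L \<longleftrightarrow> (\<forall>i j. i < j \<longrightarrow> L $ i $ j = 0)"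

definition cholesky :: "real^('n::{finite,wellorder})^('n::{finite,wellorder}) \<Rightarrow> real^('n::{finite,wellorder})^('n::{finite,wellorder})" where
  "cholesky A = (THE L. lower_triangular L \<and> (\<forall>i. L $ i $ i > 0) \<and> L ** transpose L = A)"

(* W_t = L_{t-1}^{-1} (b_{t-1}, x_t) *)
definition aioli_W :: "real \<Rightarrow> real \<Rightarrow> real \<Rightarrow> (nat \<Rightarrow> real^('n::{finite,wellorder})) \<Rightarrow> (nat \<Rightarrow> real) \<Rightarrow> (nat \<Rightarrow> real^('n::{finite,wellorder})) \<Rightarrow> nat \<Rightarrow> real^2^('n::{finite,wellorder})" where
  "aioli_W lam B R x y th t =
     (let Li = matrix_inv (cholesky (aioli_A lam B R x y th t));
          c1 = Li *v aioli_b B R x y th t; c2 = Li *v x t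
      in \<chi> i. vector [c1 $ i, c2 $ i])"

definition diag_mat :: "real^'p \<Rightarrow> real^'p^'p" where
  "diag_mat s = (\<chi> i j. if i = j then s $ i else 0)"

(* economic eigendecomposition W^T W = U Sigma U^T, U : 2 x p with orthonormal columns,
   Sigma = diag sig positive; p = CARD('p) = rank W *)
definition is_econ_eig :: "real^2^2 \<Rightarrow> real^'p^2 \<Rightarrow> real^'p \<Rightarrow> bool" where
  "is_econ_eig M U sig \<longleftrightarrow> CARD('p) = rank M \<and> transpose U ** U = mat 1 \<and> (\<forall>i. sig $ i > 0)
      \<and> M = U ** diag_mat sig ** transpose U"

definition eig_u :: "real^'p^2 \<Rightarrow> real^'p \<Rightarrow> real^'p" where
  "eig_u U sig = (\<chi> i. sqrt (sig $ i) * U $ 1 $ i)"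

definition eig_v :: "real^'p^2 \<Rightarrow> real^'p \<Rightarrow> real^'p" where
  "eig_v U sig = (\<chi> i. sqrt (sig $ i) * U $ 2 $ i)"

definition Omega :: "real^'p \<Rightarrow> real^'p \<Rightarrow> real^'p \<Rightarrow> real" where
  "Omega u v \<omega> = (norm \<omega>)^2 - 2 * (u \<bullet> \<omega>) + ln (1 + exp (- (v \<bullet> \<omega>))) + ln (1 + exp (v \<bullet> \<omega>))"

definition gd_iter :: "('a::real_inner \<Rightarrow> real) \<Rightarrow> real \<Rightarrow> nat \<Rightarrow> 'a" where
  "gd_iter f \<gamma> T = ((\<lambda>w. w - \<gamma> *\<^sub>R grad f w) ^^ T) 0"

end

theory Submission
  imports Defs
begin

(* Omega_t(w) = |w|^2 - 2 u.w + psi(v.w) with psi(z) = log(1 + e^-z) + log(1 + e^z), a convex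
   function whose derivative tanh(z/2) is 1/2-Lipschitz.  A gradient step of size gamma therefore
   maps a difference a - b to (1 - 2 gamma)(a - b) - gamma k (v.(a - b)) v with 0 <= k <= 1/2, a
   contraction of ratio 1 - 2 gamma as soon as gamma (4 + |v|^2) <= 1.  Its fixed point is a
   stationary point, hence by 2-strong convexity the minimiser omega_t, and |omega_t| <= |u| + |v|/2.
   So after T steps from 0 the error is at most (1 - 2 gamma)^T (|u| + |v|/2).
   On the other side, u and v have the norms of the columns L^-1 b_{t-1} and L^-1 x_t of W_t, and
   A_{t-1} >= lam I gives |L^-1 z| <= |z| / sqrt lam.  Every summand of b_{t-1} has norm at most
   2R, so |u| + |v|/2 <= R t / sqrt lam, and the choice of gamma and T makes
   (1 - 2 gamma)^T R t / sqrt lam <= eps. *)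

section \<open>Cholesky factors of positive definite matrices\<close>

lemma outer_nth [simp]: "outer g h $ i $ j = g $ i * h $ j"
  by (simp add: outer_def)

lemma outer_mult_vector: "outer g h *v (z::real^'n) = (h \<bullet> z) *\<^sub>R g"
  by (simp add: vec_eq_iff matrix_vector_mult_def inner_vec_def sum_distrib_left mult_ac)

definition matrix_supported_in :: "'n set \<Rightarrow> real^'n^'n \<Rightarrow> bool" where
  "matrix_supported_in S A \<longleftrightarrow> (\<forall>i j. i \<notin> S \<or> j \<notin> S \<longrightarrow> A $ i $ j = 0)"

definition pos_def_on :: "'n set \<Rightarrow> real^'n^'n \<Rightarrow> bool" where
  "pos_def_on S A \<longleftrightarrow> (\<forall>z. z \<noteq> 0 \<and> (\<forall>i. i \<notin> S \<longrightarrow> z $ i = 0) \<longrightarrow> 0 < z \<bullet> (A *v z))"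

lemma symmetric_matrix_nth:
  assumes "transpose A = A"
  shows "A $ i $ j = A $ j $ i"
proof -
  have "transpose A $ i $ j = A $ j $ i" by (simp add: transpose_def)
  then show ?thesis using assms by simp
qed

lemma schur_complement_pos_def_on:
  fixes A :: "real^'n^'n"
  assumes supp: "matrix_supported_in S A" and sym: "transpose A = A"
    and pd: "pos_def_on S A" and m: "m \<in> S"
  defines "l \<equiv> \<chi> i. A $ i $ m / sqrt (A $ m $ m)"
  shows "0 < A $ m $ m" and "matrix_supported_in (S - {m}) (A - outer l l)"
    and "transpose (A - outer l l) = A - outer l l" and "pos_def_on (S - {m}) (A - outer l l)"
proof -
  define a where "a = A $ m $ m"
  have "0 < axis m 1 \<bullet> (A *v axis m (1::real))"
    using pd m by (auto simp: pos_def_on_def axis_def vec_eq_iff)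
  then show a_pos: "0 < A $ m $ m"
    by (simp add: inner_axis' matrix_vector_mult_basis column_def)
  have Anth: "(A - outer l l) $ i $ j = A $ i $ j - A $ i $ m * A $ m $ j / a" for i j
    using a_pos symmetric_matrix_nth[OF sym, of m j]
    by (simp add: l_def a_def real_sqrt_mult[symmetric] power2_eq_square[symmetric])
  show "matrix_supported_in (S - {m}) (A - outer l l)"
    unfolding matrix_supported_in_def Anth
    using supp symmetric_matrix_nth[OF sym] a_pos by (auto simp: matrix_supported_in_def a_def)
  show "transpose (A - outer l l) = A - outer l l"
    using symmetric_matrix_nth[OF sym] by (simp add: vec_eq_iff transpose_def Anth)
  show "pos_def_on (S - {m}) (A - outer l l)"
    unfolding pos_def_on_def
  proof (intro allI impI)
    fix z :: "real^'n" assume z: "z \<noteq> 0 \<and> (\<forall>i. i \<notin> S - {m} \<longrightarrow> z $ i = 0)"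
    define p where "p = (\<Sum>j\<in>UNIV. A $ m $ j * z $ j)"
    \<comment> \<open>the quadratic form of the Schur complement is that of \<open>A\<close> at the shifted vector \<open>w\<close>\<close>
    define w where "w = z - (p / a) *\<^sub>R axis m 1"
    have "w \<noteq> 0"
    proof
      assume "w = 0"
      then have "z = 0" using z by (auto simp: w_def vec_eq_iff axis_def split: if_splits)
      then show False using z by simp
    qed
    moreover have "\<forall>i. i \<notin> S \<longrightarrow> w $ i = 0" using z m by (auto simp: w_def axis_def)
    ultimately have "0 < w \<bullet> (A *v w)" using pd by (auto simp: pos_def_on_def)
    moreover have "w \<bullet> (A *v w) = z \<bullet> (A *v z) - p\<^sup>2 / a"
    proof -
      have "axis m 1 \<bullet> (A *v z) = p"
        by (simp add: inner_axis' p_def matrix_vector_mult_def)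
      moreover have "z \<bullet> (A *v axis m 1) = p"
        using symmetric_matrix_nth[OF sym]
        by (simp add: matrix_vector_mult_basis column_def inner_vec_def p_def mult.commute)
      moreover have "axis m 1 \<bullet> (A *v axis m 1) = a"
        by (simp add: matrix_vector_mult_basis column_def inner_axis' a_def)
      ultimately show ?thesis
        unfolding w_def using a_pos
        by (simp add: matrix_vector_mult_diff_distrib matrix_vector_mult_scaleR inner_diff_left
            inner_diff_right power2_eq_square field_simps)
    qed
    moreover have "z \<bullet> ((A - outer l l) *v z) = z \<bullet> (A *v z) - p\<^sup>2 / a"
    proof -
      have "l \<bullet> z = p / sqrt a"
        using symmetric_matrix_nth[OF sym]
        by (simp add: l_def p_def a_def inner_vec_def sum_divide_distrib mult.commute)
      moreover have "0 < a" using a_pos by (simp add: a_def)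
      ultimately show ?thesis
        by (simp add: matrix_vector_mult_diff_rdistrib outer_mult_vector inner_diff_right
            inner_commute[of z l] power_divide power2_eq_square)
    qed
    ultimately show "0 < z \<bullet> ((A - outer l l) *v z)" by simp
  qed
qed

lemma cholesky_exists_on:
  fixes A :: "real^('n::{finite,wellorder})^('n::{finite,wellorder})"
  assumes "matrix_supported_in S A" "transpose A = A" "pos_def_on S A"
  shows "\<exists>L. lower_triangular L \<and> (\<forall>i\<in>S. 0 < L $ i $ i) \<and> matrix_supported_in S L
    \<and> L ** transpose L = A"
  using assms
proof (induction "card S" arbitrary: S A rule: less_induct)
  case less
  show ?case
  proof (cases "S = {}")
    case True
    then have "A = 0" using less.prems(1) by (simp add: matrix_supported_in_def vec_eq_iff)
    then show ?thesis using True
      by (intro exI[of _ 0]) (auto simp: lower_triangular_def matrix_supported_in_def)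
  next
    case False
    \<comment> \<open>eliminating the first index of \<open>S\<close> keeps the factor lower triangular\<close>
    define m where "m = Min S"
    have m: "m \<in> S" "\<And>i. i \<in> S \<Longrightarrow> m \<le> i" using False by (simp_all add: m_def)
    define l where "l = (\<chi> i. A $ i $ m / sqrt (A $ m $ m))"
    note schur = schur_complement_pos_def_on[OF less.prems m(1), folded l_def]
    have "card (S - {m}) < card S" by (rule card_Diff1_less[OF finite m(1)])
    then obtain L' where L': "lower_triangular L'" "\<forall>i\<in>S - {m}. 0 < L' $ i $ i"
        "matrix_supported_in (S - {m}) L'" "L' ** transpose L' = A - outer l l"
      using less.hyps schur(2-4) by blast
    define L where "L = L' + outer l (axis m 1)"
    have Lnth: "L $ i $ j = L' $ i $ j + (if j = m then l $ i else 0)" for i j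
      by (simp add: L_def axis_def)
    have L'm: "L' $ i $ m = 0" "L' $ m $ i = 0" for i
      using L'(3) by (auto simp: matrix_supported_in_def)
    have lS: "l $ i = 0" if "i \<notin> S" for i
      using less.prems(1) that by (simp add: l_def matrix_supported_in_def)
    have "lower_triangular L"
      unfolding lower_triangular_def
    proof (intro allI impI)
      fix i j :: 'n assume "i < j"
      moreover have "i \<notin> S" if "j = m" using m(2) \<open>i < j\<close> that by force
      ultimately show "L $ i $ j = 0" using L'(1) lS by (auto simp: Lnth lower_triangular_def)
    qed
    moreover have "0 < L $ i $ i" if "i \<in> S" for i
    proof (cases "i = m")
      case True
      have "l $ m = sqrt (A $ m $ m)" using schur(1) by (simp add: l_def real_div_sqrt)
      then show ?thesis using True L'm schur(1) by (simp add: Lnth)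
    qed (use L'(2) that in \<open>simp add: Lnth\<close>)
    moreover have "matrix_supported_in S L"
      using L'(3) lS m(1) by (auto simp: matrix_supported_in_def Lnth)
    moreover have "L ** transpose L = A"
    proof -
      have "(L ** transpose L) $ i $ j = A $ i $ j" for i j
      proof -
        have "(L ** transpose L) $ i $ j
            = (\<Sum>k\<in>UNIV. L' $ i $ k * L' $ j $ k + (if k = m then l $ i * l $ j else 0))"
          unfolding matrix_matrix_mult_def transpose_def by (auto intro!: sum.cong simp: Lnth L'm)
        also have "\<dots> = (L' ** transpose L') $ i $ j + l $ i * l $ j"
          by (simp add: sum.distrib matrix_matrix_mult_def transpose_def)
        finally show ?thesis using L'(4) by simp
      qed
      then show ?thesis by (simp add: vec_eq_iff)
    qed
    ultimately show ?thesis by blast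
  qed
qed

lemma lower_triangular_mult_transpose_nth:
  fixes L :: "real^('n::{finite,wellorder})^('n::{finite,wellorder})"
  assumes "lower_triangular L"
  shows "(L ** transpose L) $ i $ j = (\<Sum>k\<in>{..<j}. L $ i $ k * L $ j $ k) + L $ i $ j * L $ j $ j"
proof -
  have "(L ** transpose L) $ i $ j = (\<Sum>k\<in>UNIV. L $ i $ k * L $ j $ k)"
    by (simp add: matrix_matrix_mult_def transpose_def)
  also have "\<dots> = (\<Sum>k\<in>insert j {..<j}. L $ i $ k * L $ j $ k)"
    using assms by (intro sum.mono_neutral_right) (auto simp: lower_triangular_def)
  also have "\<dots> = (\<Sum>k\<in>{..<j}. L $ i $ k * L $ j $ k) + L $ i $ j * L $ j $ j"
    by simp
  finally show ?thesis .
qed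

lemma cholesky_unique:
  fixes L1 L2 :: "real^('n::{finite,wellorder})^('n::{finite,wellorder})"
  assumes L1: "lower_triangular L1" "\<forall>i. 0 < L1 $ i $ i"
    and L2: "lower_triangular L2" "\<forall>i. 0 < L2 $ i $ i"
    and eq: "L1 ** transpose L1 = L2 ** transpose L2"
  shows "L1 = L2"
proof -
  \<comment> \<open>column by column: the entries left of column \<open>j\<close> already agree\<close>
  have "\<forall>i. L1 $ i $ j = L2 $ i $ j" for j
  proof (induction j rule: less_induct)
    case (less j)
    have col: "L1 $ i $ j * L1 $ j $ j = L2 $ i $ j * L2 $ j $ j" for i
      using lower_triangular_mult_transpose_nth[OF L1(1), of i j]
        lower_triangular_mult_transpose_nth[OF L2(1), of i j] eq less.IH by simp
    have "L1 $ j $ j = L2 $ j $ j"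
      using power2_eq_imp_eq[of "L1 $ j $ j" "L2 $ j $ j"] col[of j] L1(2) L2(2)
      by (simp add: power2_eq_square less_imp_le)
    moreover have "L2 $ j $ j \<noteq> 0" using L2(2) by (metis less_irrefl)
    ultimately show ?case using col by simp
  qed
  then show ?thesis by (simp add: vec_eq_iff)
qed

lemma cholesky_mult_transpose:
  fixes A :: "real^('n::{finite,wellorder})^('n::{finite,wellorder})"
  assumes "transpose A = A" "\<forall>z. z \<noteq> 0 \<longrightarrow> 0 < z \<bullet> (A *v z)"
  shows "cholesky A ** transpose (cholesky A) = A"
proof -
  obtain L where L: "lower_triangular L" "\<forall>i. 0 < L $ i $ i" "L ** transpose L = A"
    using cholesky_exists_on[of UNIV A] assms by (auto simp: matrix_supported_in_def pos_def_on_def)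
  have "\<exists>!L. lower_triangular L \<and> (\<forall>i. 0 < L $ i $ i) \<and> L ** transpose L = A"
  proof (rule ex1I)
    fix L' assume "lower_triangular L' \<and> (\<forall>i. 0 < L' $ i $ i) \<and> L' ** transpose L' = A"
    then show "L' = L" using cholesky_unique[of L' L] L by simp
  qed (use L in blast)
  then show ?thesis unfolding cholesky_def by (rule theI'[THEN conjunct2, THEN conjunct2])
qed

lemma matrix_mul_matrix_inv: "invertible (A::real^'n^'n) \<Longrightarrow> A ** matrix_inv A = mat 1"
  unfolding invertible_def matrix_inv_def by (rule someI2_ex) auto

lemma norm_matrix_inv_factor_le:
  fixes L A :: "real^'n^'n"
  assumes LA: "L ** transpose L = A" and lam: "0 < lam"
    and lower: "\<forall>z. lam * (norm z)\<^sup>2 \<le> z \<bullet> (A *v z)"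
  shows "norm (matrix_inv L *v x) \<le> norm x / sqrt lam"
proof -
  have "w = 0" if "transpose L *v w = 0" for w
  proof -
    have "A *v w = 0" using LA that by (metis matrix_vector_mul_assoc matrix_vector_mult_0_right)
    then have "lam * (norm w)\<^sup>2 \<le> 0" using lower by (metis inner_zero_right)
    then show "w = 0" using lam by (simp add: mult_le_0_iff)
  qed
  then have invT: "invertible (transpose L)"
    using matrix_left_invertible_ker invertible_left_inverse by blast
  then have inv: "invertible L" using transpose_invertible by fastforce
  define w where "w = matrix_inv L *v x"
  define z where "z = matrix_inv (transpose L) *v w"
  have Lw: "L *v w = x"
    by (simp add: w_def matrix_vector_mul_assoc matrix_mul_matrix_inv[OF inv])
  have Tz: "transpose L *v z = w"
    by (simp add: z_def matrix_vector_mul_assoc matrix_mul_matrix_inv[OF invT])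
  have "A *v z = x" using LA Tz Lw by (metis matrix_vector_mul_assoc)
  then have lz: "lam * (norm z)\<^sup>2 \<le> z \<bullet> x" using lower by metis
  have "w \<bullet> w = (transpose L *v z) \<bullet> w" using Tz by simp
  also have "\<dots> = z \<bullet> (L *v w)" by (simp add: dot_lmul_matrix)
  finally have wz: "(norm w)\<^sup>2 = z \<bullet> x" using Lw by (simp add: power2_norm_eq_inner)
  have "lam * norm z \<le> norm x"
  proof (cases "z = 0")
    case False
    have "(lam * norm z) * norm z = lam * (norm z)\<^sup>2" by (simp add: power2_eq_square)
    also have "\<dots> \<le> z \<bullet> x" by (rule lz)
    also have "\<dots> \<le> norm x * norm z" using norm_cauchy_schwarz[of z x] by (simp add: mult.commute)
    finally show ?thesis using False by simp
  qed simp
  have "lam * (z \<bullet> x) \<le> (lam * norm z) * norm x"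
    using lam norm_cauchy_schwarz[of z x] by (simp add: mult.assoc)
  also have "\<dots> \<le> norm x * norm x" using \<open>lam * norm z \<le> norm x\<close> by (rule mult_right_mono) simp
  finally have "lam * (z \<bullet> x) \<le> (norm x)\<^sup>2" by (simp add: power2_eq_square)
  then have "lam * (norm w)\<^sup>2 \<le> (norm x)\<^sup>2" using wz by simp
  then have "(norm w)\<^sup>2 \<le> (norm x / sqrt lam)\<^sup>2"
    using lam by (simp add: power_divide field_simps)
  then have "norm w \<le> norm x / sqrt lam" by (rule power2_le_imp_le) (use lam in simp)
  then show ?thesis by (simp add: w_def)
qed

section \<open>Bounds on \<open>u\<close> and \<open>v\<close>\<close>

lemma grad_eqI:
  fixes f :: "'a::real_inner \<Rightarrow> real"
  assumes "GDERIV f x :> D"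
  shows "grad f x = D"
  unfolding grad_def
proof (rule the_equality)
  fix D' assume "GDERIV f x :> D'"
  then have "(\<lambda>h. h \<bullet> D') = (\<lambda>h. h \<bullet> D)"
    using assms unfolding gderiv_def by (rule has_derivative_unique)
  then have "(D' - D) \<bullet> D' = (D' - D) \<bullet> D" by metis
  then have "(D' - D) \<bullet> (D' - D) = 0" by (simp add: inner_diff_right)
  then show "D' = D" by simp
qed (rule assms)

lemma logistic_has_derivative:
  fixes y z :: real
  shows "((\<lambda>z. ln (1 + exp (- y * z))) has_real_derivative
          - y * exp (- y * z) / (1 + exp (- y * z))) (at z)"
proof -
  have "((\<lambda>z. 1 + exp (- y * z)) has_real_derivative exp (- y * z) * (- y)) (at z)"
    by (auto intro!: derivative_eq_intros)
  moreover have "0 < 1 + exp (- y * z)" by (simp add: add_pos_pos)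
  ultimately show ?thesis using DERIV_chain2[OF DERIV_ln_divide] by (fastforce simp: mult.commute)
qed

lemma aioli_g_eq:
  "aioli_g x y th s
     = (- y s * exp (- y s * (th s \<bullet> x s)) / (1 + exp (- y s * (th s \<bullet> x s)))) *\<^sub>R x s"
proof -
  have "GDERIV (\<lambda>\<theta>. \<theta> \<bullet> x s) (th s) :> x s"
    unfolding gderiv_def by (auto intro!: derivative_eq_intros)
  then show ?thesis
    unfolding aioli_g_def logloss_def by (intro grad_eqI GDERIV_DERIV_compose logistic_has_derivative)
qed

lemma transpose_aioli_A: "transpose (aioli_A lam B R x y th t) = aioli_A lam B R x y th t"
  by (simp add: vec_eq_iff transpose_def aioli_A_def sum_component mat_def mult.commute)

lemma matrix_vector_mult_sum: "sum f S *v z = (\<Sum>s\<in>S. f s *v z)"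
  by (induction S rule: infinite_finite_induct) (simp_all add: matrix_vector_mult_add_rdistrib)

lemma aioli_A_quadratic_ge:
  assumes "0 < B" "0 < R"
  shows "lam * (norm z)\<^sup>2 \<le> z \<bullet> (aioli_A lam B R x y th t *v z)"
proof -
  let ?g = "aioli_g x y th" and ?\<eta> = "aioli_eta B R x y th"
  have "z \<bullet> (aioli_A lam B R x y th t *v z)
      = lam * (z \<bullet> z) + (1 / 2) * (\<Sum>s\<in>{1..<t}. ?\<eta> s * (?g s \<bullet> z) * (z \<bullet> ?g s))"
    by (simp add: aioli_A_def matrix_vector_mult_add_rdistrib matrix_vector_mult_sum outer_mult_vector
        flip: scaleR_matrix_vector_assoc add: inner_add_right inner_sum_right mult_ac)
  moreover have "0 \<le> ?\<eta> s * (?g s \<bullet> z) * (z \<bullet> ?g s)" for s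
  proof -
    have "0 < ?\<eta> s" using assms by (simp add: aioli_eta_def add_pos_pos)
    then show ?thesis by (simp add: inner_commute[of z] mult.assoc)
  qed
  ultimately show ?thesis by (simp add: power2_norm_eq_inner sum_nonneg)
qed

lemma logistic_coefficient_le_2:
  fixes a c :: real
  assumes "1 \<le> c"
  shows "\<bar>a / ((1 + exp (- a)) * c) + 1\<bar> * (exp (- a) / (1 + exp (- a))) \<le> 2"
proof -
  define e where "e = exp (- a)"
  have e: "0 < e" by (simp add: e_def)
  have key: "\<bar>a\<bar> * e \<le> (1 + e)\<^sup>2"
  proof (cases "0 \<le> a")
    case True
    have "a \<le> exp a" using exp_ge_add_one_self[of a] by linarith
    then have "a * e \<le> 1" by (simp add: e_def exp_minus field_simps)
    moreover have "1 \<le> (1 + e)\<^sup>2" using e by (simp add: one_le_power)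
    ultimately show ?thesis using True by simp
  next
    case False
    have "- a \<le> e" using exp_ge_add_one_self[of "- a"] by (simp add: e_def)
    then have "\<bar>a\<bar> * e \<le> e * e" using mult_right_mono[of "- a" e e] False e by simp
    also have "\<dots> \<le> (1 + e)\<^sup>2" using e by (simp add: power2_eq_square mult_mono)
    finally show ?thesis .
  qed
  have "\<bar>a\<bar> * e / ((1 + e)\<^sup>2 * c) \<le> \<bar>a\<bar> * e / (1 + e)\<^sup>2"
    using e assms by (intro divide_left_mono) (auto simp: mult_pos_pos)
  also have "\<dots> \<le> 1" using key e by (simp add: divide_le_eq)
  finally have small: "\<bar>a\<bar> * e / ((1 + e)\<^sup>2 * c) \<le> 1" .
  have "\<bar>a / ((1 + e) * c) + 1\<bar> * (e / (1 + e)) \<le> (\<bar>a\<bar> / ((1 + e) * c) + 1) * (e / (1 + e))"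
    using e assms by (intro mult_right_mono) (auto simp: abs_divide abs_mult intro: order.trans[OF abs_triangle_ineq])
  also have "\<dots> = \<bar>a\<bar> * e / ((1 + e)\<^sup>2 * c) + e / (1 + e)"
  proof -
    have "0 < (1 + e) * c" "0 < 1 + e" using e assms by auto
    then show ?thesis by (simp add: divide_simps power2_eq_square) (simp add: algebra_simps)
  qed
  also have "\<dots> \<le> 1 + 1"
    using small e by (intro add_mono) auto
  finally show ?thesis by (simp add: e_def)
qed

lemma norm_aioli_b_summand_le:
  assumes B: "0 < B" and R: "0 < R" and xs: "norm (x s) \<le> R" and ys: "y s \<in> {-1, 1}"
  shows "norm ((aioli_eta B R x y th s * (aioli_g x y th s \<bullet> th s) - 1) *\<^sub>R aioli_g x y th s) \<le> 2 * R"
proof -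
  define a where "a = y s * (th s \<bullet> x s)"
  define e where "e = exp (- a)"
  define c where "c = 1 + B * R"
  have yy: "y s * y s = 1" "\<bar>y s\<bar> = 1" using ys by auto
  have e: "0 < e" "exp a * e = 1" by (simp_all add: e_def exp_minus)
  have g: "aioli_g x y th s = (- y s * e / (1 + e)) *\<^sub>R x s"
    by (simp add: aioli_g_eq e_def a_def)
  \<comment> \<open>the factor \<open>exp a\<close> of \<open>\<eta>\<^sub>s\<close> cancels the sigmoid factor \<open>e / (1 + e)\<close> of \<open>g\<^sub>s\<close>\<close>
  have "aioli_eta B R x y th s * (aioli_g x y th s \<bullet> th s) = - ((exp a * e) * a) / ((1 + e) * c)"
    unfolding g using yy by (simp add: aioli_eta_def a_def c_def inner_commute field_simps)
  then have "norm ((aioli_eta B R x y th s * (aioli_g x y th s \<bullet> th s) - 1) *\<^sub>R aioli_g x y th s)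
      = \<bar>a / ((1 + e) * c) + 1\<bar> * (e / (1 + e)) * norm (x s)"
    using e yy by (simp add: g abs_mult abs_divide abs_minus_commute add.commute)
  also have "\<dots> \<le> 2 * R"
    using logistic_coefficient_le_2[of c a] B R xs by (intro mult_mono) (auto simp: c_def e_def)
  finally show ?thesis .
qed

lemma norm_aioli_b_le:
  assumes "0 < B" "0 < R" and xy: "\<forall>s\<ge>1. norm (x s) \<le> R \<and> y s \<in> {-1, 1}" and "1 \<le> t"
  shows "norm (aioli_b B R x y th t) \<le> (real t - 1) * R"
proof -
  have "norm (aioli_b B R x y th t) = (1 / 2) * norm (\<Sum>s\<in>{1..<t}.
      (aioli_eta B R x y th s * (aioli_g x y th s \<bullet> th s) - 1) *\<^sub>R aioli_g x y th s)"
    by (simp add: aioli_b_def)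
  also have "\<dots> \<le> (1 / 2) * (\<Sum>s\<in>{1..<t}. 2 * R)"
  proof (intro mult_left_mono order.trans[OF norm_sum] sum_mono)
    fix s assume "s \<in> {1..<t}"
    then show "norm ((aioli_eta B R x y th s * (aioli_g x y th s \<bullet> th s) - 1) *\<^sub>R aioli_g x y th s) \<le> 2 * R"
      using xy by (intro norm_aioli_b_summand_le[OF assms(1,2)]) auto
  qed simp
  also have "\<dots> = (real t - 1) * R" using assms(4) by (simp add: of_nat_diff)
  finally show ?thesis .
qed

lemma norm_eig_uv:
  fixes W :: "real^2^'n" and U :: "real^'p^2"
  assumes WU: "transpose W ** W = U ** diag_mat sig ** transpose U" and sig: "\<forall>i. 0 \<le> sig $ i"
  shows "norm (eig_u U sig) = norm (column 1 W)" and "norm (eig_v U sig) = norm (column 2 W)"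
proof -
  \<comment> \<open>both sides are square roots of the diagonal entry \<open>(W\<^sup>T W)\<^sub>k\<^sub>k = (U \<Sigma> U\<^sup>T)\<^sub>k\<^sub>k\<close>\<close>
  have "(norm (\<chi> i. sqrt (sig $ i) * U $ k $ i))\<^sup>2 = (norm (column k W))\<^sup>2" for k
  proof -
    have "(norm (column k W))\<^sup>2 = (transpose W ** W) $ k $ k"
      by (simp add: power2_norm_eq_inner inner_vec_def column_def matrix_matrix_mult_def transpose_def)
    also have "\<dots> = (\<Sum>i\<in>UNIV. sig $ i * (U $ k $ i)\<^sup>2)"
      unfolding WU by (simp add: matrix_matrix_mult_def transpose_def diag_mat_def power2_eq_square
          mult_ac if_distrib cong: if_cong)
    also have "\<dots> = (norm (\<chi> i. sqrt (sig $ i) * U $ k $ i))\<^sup>2"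
      using sig by (simp add: power2_norm_eq_inner inner_vec_def power2_eq_square[symmetric]
          power_mult_distrib)
    finally show ?thesis by simp
  qed
  then show "norm (eig_u U sig) = norm (column 1 W)" and "norm (eig_v U sig) = norm (column 2 W)"
    unfolding eig_u_def eig_v_def by (simp_all add: power2_eq_iff_nonneg)
qed

lemma aioli_eig_norms_le:
  fixes x :: "nat \<Rightarrow> real^'n::{finite,wellorder}"
  assumes lam: "0 < lam" and R: "0 < R" and B: "0 < B"
    and xy: "\<forall>s\<ge>1. norm (x s) \<le> R \<and> y s \<in> {-1, 1}" and t: "1 \<le> t"
    and eig: "is_econ_eig (transpose (aioli_W lam B R x y th t) ** aioli_W lam B R x y th t) U sig"
  shows "norm (eig_u U sig) \<le> (real t - 1) * R / sqrt lam" and "norm (eig_v U sig) \<le> R / sqrt lam"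
proof -
  define A where "A = aioli_A lam B R x y th t"
  have lower: "\<forall>z. lam * (norm z)\<^sup>2 \<le> z \<bullet> (A *v z)"
    unfolding A_def using aioli_A_quadratic_ge[OF B R] by blast
  have "\<forall>z. z \<noteq> 0 \<longrightarrow> 0 < z \<bullet> (A *v z)"
  proof (intro allI impI)
    fix z :: "real^'n::{finite,wellorder}" assume "z \<noteq> 0"
    then have "0 < lam * (norm z)\<^sup>2" using lam by simp
    then show "0 < z \<bullet> (A *v z)" using lower by (meson less_le_trans)
  qed
  moreover have "transpose A = A" by (simp add: A_def transpose_aioli_A)
  ultimately have LA: "cholesky A ** transpose (cholesky A) = A"
    by (intro cholesky_mult_transpose)
  note inv_le = norm_matrix_inv_factor_le[OF LA lam lower]
  have cols: "column 1 (aioli_W lam B R x y th t) = matrix_inv (cholesky A) *v aioli_b B R x y th t"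
    "column 2 (aioli_W lam B R x y th t) = matrix_inv (cholesky A) *v x t"
    by (simp_all add: aioli_W_def A_def column_def vec_eq_iff Let_def)
  have sig: "transpose (aioli_W lam B R x y th t) ** aioli_W lam B R x y th t = U ** diag_mat sig ** transpose U"
    "\<forall>i. 0 \<le> sig $ i"
    using eig by (auto simp: is_econ_eig_def less_imp_le)
  have "norm (eig_u U sig) \<le> norm (aioli_b B R x y th t) / sqrt lam"
    using norm_eig_uv(1)[OF sig] inv_le by (simp add: cols)
  also have "\<dots> \<le> (real t - 1) * R / sqrt lam"
    using norm_aioli_b_le[OF B R xy t] lam by (intro divide_right_mono) auto
  finally show "norm (eig_u U sig) \<le> (real t - 1) * R / sqrt lam" .
  have "norm (eig_v U sig) \<le> norm (x t) / sqrt lam"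
    using norm_eig_uv(2)[OF sig] inv_le by (simp add: cols)
  also have "\<dots> \<le> R / sqrt lam"
    using xy t lam by (intro divide_right_mono) auto
  finally show "norm (eig_v U sig) \<le> R / sqrt lam" .
qed

section \<open>Gradient descent on \<open>\<Omega>\<close>\<close>

definition sym_logistic :: "real \<Rightarrow> real" where
  "sym_logistic z = ln (1 + exp (- z)) + ln (1 + exp z)"

lemma sym_logistic_has_derivative: "(sym_logistic has_real_derivative tanh (z / 2)) (at z)"
proof -
  have "(sym_logistic has_real_derivative - (exp (- z) / (1 + exp (- z))) + exp z / (1 + exp z)) (at z)"
    unfolding sym_logistic_def[abs_def]
    using DERIV_add[OF logistic_has_derivative[of 1 z] logistic_has_derivative[of "-1" z]] by simp
  moreover have "exp z / (1 + exp z) = 1 / (1 + exp (- z))"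
    by (simp add: exp_minus field_simps)
  moreover have "tanh (z / 2) = (1 - exp (- z)) / (1 + exp (- z))"
    by (simp add: tanh_real_altdef)
  ultimately show ?thesis by (simp add: diff_divide_distrib)
qed

lemma tanh_half_increment:
  fixes r s :: real
  obtains k where "0 \<le> k" "k \<le> 1 / 2" "tanh (s / 2) - tanh (r / 2) = k * (s - r)"
proof -
  have deriv: "((\<lambda>z. tanh (z / 2)) has_real_derivative (1 - (tanh (z / 2))\<^sup>2) / 2) (at z)" for z :: real
    by (auto intro!: derivative_eq_intros)
  have slope: "0 \<le> (1 - (tanh (z / 2))\<^sup>2) / 2 \<and> (1 - (tanh (z / 2))\<^sup>2) / 2 \<le> 1 / 2" for z :: real
    using tanh_real_bounds[of "z / 2"] by (auto simp: abs_square_le_1 less_imp_le)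
  have mvt: "\<exists>k. 0 \<le> k \<and> k \<le> 1 / 2 \<and> tanh (b / 2) - tanh (a / 2) = k * (b - a)"
    if ab: "a < b" for a b :: real
  proof -
    obtain z where "tanh (b / 2) - tanh (a / 2) = (b - a) * ((1 - (tanh (z / 2))\<^sup>2) / 2)"
      using MVT2[OF ab, of "\<lambda>z. tanh (z / 2)" "\<lambda>z. (1 - (tanh (z / 2))\<^sup>2) / 2"] deriv by blast
    then show ?thesis using slope[of z] by (intro exI[of _ "(1 - (tanh (z / 2))\<^sup>2) / 2"]) simp
  qed
  consider "r < s" | "r = s" | "s < r" by linarith
  then show thesis
  proof cases
    case 1
    then show ?thesis using mvt that by blast
  next
    case 2
    then show ?thesis using that[of 0] by simp
  next
    case 3
    then obtain k where k: "0 \<le> k" "k \<le> 1 / 2" "tanh (r / 2) - tanh (s / 2) = k * (r - s)"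
      using mvt by blast
    have "tanh (s / 2) - tanh (r / 2) = k * (s - r)"
      using k(3) by (metis minus_diff_eq mult_minus_right)
    then show ?thesis using that k(1,2) by blast
  qed
qed

lemma sym_logistic_above_tangent: "sym_logistic r + tanh (r / 2) * (s - r) \<le> sym_logistic s"
proof -
  have "convex_on UNIV sym_logistic"
    by (rule convex_on_realI[where f' = "\<lambda>z. tanh (z / 2)"])
      (auto intro: sym_logistic_has_derivative)
  then have "tanh (r / 2) * (s - r) \<le> sym_logistic s - sym_logistic r"
    by (rule convex_on_imp_above_tangent) (auto intro: sym_logistic_has_derivative)
  then show ?thesis by simp
qed

lemma Omega_eq: "Omega u v w = w \<bullet> w - 2 * (u \<bullet> w) + sym_logistic (v \<bullet> w)"
  by (simp add: Omega_def sym_logistic_def power2_norm_eq_inner)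

lemma grad_Omega: "grad (Omega u v) w = 2 *\<^sub>R w - 2 *\<^sub>R u + tanh ((v \<bullet> w) / 2) *\<^sub>R v"
proof (rule grad_eqI)
  have lin: "GDERIV (\<lambda>\<omega>. c \<bullet> \<omega>) w :> c" for c :: "real^'a"
    unfolding gderiv_def by (auto intro!: derivative_eq_intros simp: inner_commute)
  have sq: "GDERIV (\<lambda>\<omega>. \<omega> \<bullet> \<omega>) w :> 2 *\<^sub>R w"
    unfolding gderiv_def by (auto intro!: derivative_eq_intros simp: inner_commute fun_eq_iff)
  show "GDERIV (Omega u v) w :> 2 *\<^sub>R w - 2 *\<^sub>R u + tanh ((v \<bullet> w) / 2) *\<^sub>R v"
    unfolding Omega_eq[abs_def]
    using GDERIV_add[OF GDERIV_diff[OF sq GDERIV_mult[OF GDERIV_const lin]]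
        GDERIV_DERIV_compose[OF lin sym_logistic_has_derivative]]
    by simp
qed

definition gd_step :: "('a::real_inner \<Rightarrow> real) \<Rightarrow> real \<Rightarrow> 'a \<Rightarrow> 'a" where
  "gd_step f \<gamma> w = w - \<gamma> *\<^sub>R grad f w"

lemma gd_step_Omega_contraction:
  fixes u v a b :: "real^'p::finite"
  assumes \<gamma>: "0 < \<gamma>" "\<gamma> * (4 + (norm v)\<^sup>2) \<le> 1"
  shows "norm (gd_step (Omega u v) \<gamma> a - gd_step (Omega u v) \<gamma> b) \<le> (1 - 2 * \<gamma>) * norm (a - b)"
proof -
  obtain k where k: "0 \<le> k" "k \<le> 1 / 2"
    "tanh ((v \<bullet> a) / 2) - tanh ((v \<bullet> b) / 2) = k * (v \<bullet> a - v \<bullet> b)"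
    using tanh_half_increment by blast
  define q c d p where "q = 1 - 2 * \<gamma>" and "c = \<gamma> * k" and "d = a - b" and "p = v \<bullet> d"
  have "gd_step (Omega u v) \<gamma> a - gd_step (Omega u v) \<gamma> b
      = q *\<^sub>R d - (\<gamma> * (tanh ((v \<bullet> a) / 2) - tanh ((v \<bullet> b) / 2))) *\<^sub>R v"
    by (simp add: gd_step_def grad_Omega q_def d_def algebra_simps)
  also have "\<dots> = q *\<^sub>R d - (c * p) *\<^sub>R v"
    by (simp add: k(3) c_def p_def d_def inner_diff_right mult.assoc)
  finally have diff: "gd_step (Omega u v) \<gamma> a - gd_step (Omega u v) \<gamma> b = q *\<^sub>R d - (c * p) *\<^sub>R v" .
  have \<gamma>4: "\<gamma> * 4 + \<gamma> * (norm v)\<^sup>2 \<le> 1" "0 \<le> \<gamma> * (norm v)\<^sup>2"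
    using \<gamma> by (simp_all add: distrib_left)
  have "c \<le> \<gamma> / 2" using mult_left_mono[OF k(2), of \<gamma>] \<gamma>(1) by (simp add: c_def)
  then have "c * (norm v)\<^sup>2 \<le> \<gamma> / 2 * (norm v)\<^sup>2" by (rule mult_right_mono) simp
  then have "2 * (c * (norm v)\<^sup>2) \<le> \<gamma> * (norm v)\<^sup>2" by simp
  then have "c * (norm v)\<^sup>2 \<le> 2 - 4 * \<gamma>" using \<gamma>4 by linarith
  then have "c * (norm v)\<^sup>2 \<le> 2 * q" by (simp add: q_def)
  moreover have "0 \<le> c * p\<^sup>2" using k \<gamma>(1) by (simp add: c_def)
  ultimately have "(c * p\<^sup>2) * (c * (norm v)\<^sup>2 - 2 * q) \<le> 0" by (simp add: mult_nonneg_nonpos)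
  moreover have "(norm (q *\<^sub>R d - (c * p) *\<^sub>R v))\<^sup>2
      = q\<^sup>2 * (norm d)\<^sup>2 + (c * p\<^sup>2) * (c * (norm v)\<^sup>2 - 2 * q)"
    unfolding power2_norm_eq_inner by (simp add: inner_diff_left inner_diff_right p_def inner_commute[of v d]
        power2_eq_square algebra_simps)
  ultimately have "(norm (q *\<^sub>R d - (c * p) *\<^sub>R v))\<^sup>2 \<le> (q * norm d)\<^sup>2"
    by (simp add: power_mult_distrib)
  moreover have "0 \<le> q * norm d" using \<gamma>4 unfolding q_def by simp
  ultimately have "norm (q *\<^sub>R d - (c * p) *\<^sub>R v) \<le> q * norm d" by (rule power2_le_imp_le)
  then show ?thesis unfolding diff by (simp add: q_def d_def)
qed

lemma Omega_ge_stationary: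
  assumes "grad (Omega u v) \<omega> = 0"
  shows "Omega u v \<omega> + (norm (w - \<omega>))\<^sup>2 \<le> Omega u v w"
proof -
  have stat: "tanh ((v \<bullet> \<omega>) / 2) *\<^sub>R v = 2 *\<^sub>R u - 2 *\<^sub>R \<omega>"
    using assms by (simp add: grad_Omega algebra_simps)
  have "tanh ((v \<bullet> \<omega>) / 2) * (v \<bullet> w - v \<bullet> \<omega>) = (tanh ((v \<bullet> \<omega>) / 2) *\<^sub>R v) \<bullet> (w - \<omega>)"
    by (simp add: inner_diff_right right_diff_distrib)
  also have "\<dots> = 2 * (u \<bullet> w) - 2 * (u \<bullet> \<omega>) - 2 * (\<omega> \<bullet> w) + 2 * (\<omega> \<bullet> \<omega>)"
    unfolding stat by (simp add: inner_diff_left inner_diff_right algebra_simps)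
  finally have "tanh ((v \<bullet> \<omega>) / 2) * (v \<bullet> w - v \<bullet> \<omega>)
      = 2 * (u \<bullet> w) - 2 * (u \<bullet> \<omega>) - 2 * (\<omega> \<bullet> w) + 2 * (\<omega> \<bullet> \<omega>)" .
  moreover have "(norm (w - \<omega>))\<^sup>2 = w \<bullet> w - 2 * (\<omega> \<bullet> w) + \<omega> \<bullet> \<omega>"
    unfolding power2_norm_eq_inner by (simp add: inner_diff_left inner_diff_right inner_commute)
  ultimately show ?thesis
    using sym_logistic_above_tangent[of "v \<bullet> \<omega>" "v \<bullet> w"] unfolding Omega_eq by linarith
qed

lemma argmin_Omega_eqI:
  assumes "grad (Omega u v) \<omega> = 0"
  shows "argmin (Omega u v) = \<omega>"
  unfolding argmin_def
proof (rule the_equality)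
  show "\<forall>w. Omega u v \<omega> \<le> Omega u v w"
  proof
    fix w
    show "Omega u v \<omega> \<le> Omega u v w"
      using Omega_ge_stationary[OF assms, of w] zero_le_power2[of "norm (w - \<omega>)"] by linarith
  qed
  fix z assume "\<forall>w. Omega u v z \<le> Omega u v w"
  then have "Omega u v z \<le> Omega u v \<omega>" by blast
  then have "(norm (z - \<omega>))\<^sup>2 \<le> 0" using Omega_ge_stationary[OF assms, of z] by linarith
  then show "z = \<omega>" by simp
qed

lemma norm_stationary_Omega_le:
  assumes "grad (Omega u v) \<omega> = 0"
  shows "norm \<omega> \<le> norm u + norm v / 2"
proof -
  have "2 *\<^sub>R \<omega> = 2 *\<^sub>R u - tanh ((v \<bullet> \<omega>) / 2) *\<^sub>R v"
    using assms by (simp add: grad_Omega algebra_simps)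
  then have "(1 / 2) *\<^sub>R (2 *\<^sub>R \<omega>) = (1 / 2) *\<^sub>R (2 *\<^sub>R u - tanh ((v \<bullet> \<omega>) / 2) *\<^sub>R v)"
    by simp
  then have "\<omega> = u - (tanh ((v \<bullet> \<omega>) / 2) / 2) *\<^sub>R v" by (simp add: scaleR_diff_right)
  then have "norm \<omega> \<le> norm u + norm ((tanh ((v \<bullet> \<omega>) / 2) / 2) *\<^sub>R v)"
    by (metis norm_triangle_ineq4)
  also have "\<dots> \<le> norm u + norm v / 2"
    using tanh_real_bounds[of "(v \<bullet> \<omega>) / 2"]
    by (auto intro!: mult_left_le_one_le simp: abs_less_iff)
  finally show ?thesis .
qed

lemma contraction_funpow_dist:
  fixes f :: "'a::real_normed_vector \<Rightarrow> 'a"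
  assumes "0 \<le> q" "\<And>a b. norm (f a - f b) \<le> q * norm (a - b)" "f \<omega> = \<omega>"
  shows "norm ((f ^^ n) x - \<omega>) \<le> q ^ n * norm (x - \<omega>)"
proof (induction n)
  case (Suc n)
  have "norm ((f ^^ Suc n) x - \<omega>) = norm (f ((f ^^ n) x) - f \<omega>)" using assms(3) by simp
  also have "\<dots> \<le> q * norm ((f ^^ n) x - \<omega>)" by (rule assms(2))
  also have "\<dots> \<le> q * (q ^ n * norm (x - \<omega>))" using Suc assms(1) by (rule mult_left_mono)
  finally show ?case by simp
qed simp

lemma gd_iter_Omega_error:
  fixes u v :: "real^'p::finite"
  assumes \<gamma>: "0 < \<gamma>" "\<gamma> * (4 + (norm v)\<^sup>2) \<le> 1"
  shows "norm (gd_iter (Omega u v) \<gamma> T - argmin (Omega u v)) \<le> (1 - 2 * \<gamma>) ^ T * (norm u + norm v / 2)"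
proof -
  let ?f = "gd_step (Omega u v) \<gamma>"
  have "\<gamma> * 4 + \<gamma> * (norm v)\<^sup>2 \<le> 1" using \<gamma>(2) by (simp add: distrib_left)
  moreover have "0 \<le> \<gamma> * (norm v)\<^sup>2" using \<gamma>(1) by simp
  ultimately have q: "0 \<le> 1 - 2 * \<gamma>" "1 - 2 * \<gamma> < 1" using \<gamma>(1) by linarith+
  note contr = gd_step_Omega_contraction[OF \<gamma>]
  have "\<forall>a b. dist (?f a) (?f b) \<le> (1 - 2 * \<gamma>) * dist a b" using contr by (simp add: dist_norm)
  then obtain \<omega> where fixed: "?f \<omega> = \<omega>" using banach_fix_type[OF q] by blast
  then have stat: "grad (Omega u v) \<omega> = 0" using \<gamma>(1) by (simp add: gd_step_def)
  have "gd_iter (Omega u v) \<gamma> T = (?f ^^ T) 0" by (simp add: gd_iter_def gd_step_def[abs_def])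
  then have "norm (gd_iter (Omega u v) \<gamma> T - \<omega>) \<le> (1 - 2 * \<gamma>) ^ T * norm \<omega>"
    using contraction_funpow_dist[OF q(1) contr fixed, of T 0] by simp
  also have "\<dots> \<le> (1 - 2 * \<gamma>) ^ T * (norm u + norm v / 2)"
    using norm_stationary_Omega_le[OF stat] q(1) by (simp add: mult_left_mono)
  finally show ?thesis using argmin_Omega_eqI[OF stat] by simp
qed

lemma geometric_decay_le:
  fixes q \<gamma> K \<epsilon> :: real
  assumes "0 \<le> q" "q \<le> 1 - \<gamma>" "0 \<le> \<gamma>" "0 < \<epsilon>" "0 \<le> K" "ln (K / \<epsilon>) \<le> \<gamma> * T"
  shows "q ^ T * K \<le> \<epsilon>"
proof (cases "K \<le> \<epsilon>")
  case True
  have "q ^ T \<le> 1" using assms(1-3) by (simp add: power_le_one)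
  then have "q ^ T * K \<le> K" using assms(1,5) by (simp add: mult_left_le_one_le)
  then show ?thesis using True by linarith
next
  case False
  then have K: "0 < K" using assms(4) by simp
  have "q ^ T \<le> exp (- \<gamma>) ^ T"
    using assms(1,2) exp_ge_add_one_self[of "- \<gamma>"] by (intro power_mono) auto
  also have "\<dots> = exp (- (\<gamma> * T))" by (simp add: exp_of_nat_mult[symmetric] mult.commute)
  also have "\<dots> \<le> exp (- ln (K / \<epsilon>))" using assms(6) by simp
  also have "\<dots> = \<epsilon> / K" using K assms(4) by (simp add: exp_minus)
  finally show ?thesis using K by (simp add: pos_le_divide_eq)
qed

lemma aioli_step_size:
  fixes lam R \<gamma> b :: real
  assumes lam: "0 < lam" and \<gamma>: "\<gamma> = lam / (4 * lam + R\<^sup>2)" and b: "0 \<le> b" "b \<le> R / sqrt lam"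
  shows "0 < \<gamma>" and "1 / \<gamma> = 4 + R\<^sup>2 / lam" and "\<gamma> * (4 + b\<^sup>2) \<le> 1"
    and "0 \<le> 1 - 2 * \<gamma>"
proof -
  have "0 < 4 * lam + R\<^sup>2" using lam by (simp add: add_pos_nonneg)
  then show pos: "0 < \<gamma>" and inv: "1 / \<gamma> = 4 + R\<^sup>2 / lam"
    using lam by (simp_all add: \<gamma> field_simps)
  have "b\<^sup>2 \<le> (R / sqrt lam)\<^sup>2" using b by (intro power_mono) auto
  then have "\<gamma> * (4 + b\<^sup>2) \<le> \<gamma> * (1 / \<gamma>)"
    unfolding inv using pos lam by (intro mult_left_mono) (auto simp: power_divide)
  then show step: "\<gamma> * (4 + b\<^sup>2) \<le> 1" using pos by simp
  moreover have "\<gamma> * 4 \<le> \<gamma> * (4 + b\<^sup>2)" using pos by (intro mult_left_mono) auto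
  ultimately show "0 \<le> 1 - 2 * \<gamma>" by linarith
qed

theorem lemma2:
  fixes x :: "nat \<Rightarrow> real^'n::{finite,wellorder}" and y :: "nat \<Rightarrow> real"
    and th :: "nat \<Rightarrow> real^('n::{finite,wellorder})"
    and lam R B \<epsilon> \<gamma> :: real and t T :: nat
    and U :: "real^'p::finite^2" and sig :: "real^('p::finite)"
  assumes "lam > 0" "R > 0" "B > 0"
    and "\<forall>s\<ge>1. norm (x s) \<le> R \<and> y s \<in> {-1, 1}"
    and "is_aioli_forecasts lam B R x y th"
    and "t \<ge> 1"
    and "is_econ_eig (transpose (aioli_W lam B R x y th t) ** aioli_W lam B R x y th t) U sig"
    and "\<epsilon> > 0"
    and "\<gamma> = lam / (4 * lam + R^2)"
    and "real T \<ge> (4 + R^2 / lam) * ln (R * real t / (\<epsilon> * sqrt lam))"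
  shows "norm (gd_iter (Omega (eig_u U sig) (eig_v U sig)) \<gamma> T
               - argmin (Omega (eig_u U sig) (eig_v U sig))) \<le> \<epsilon>"
proof -
  let ?u = "eig_u U sig" and ?v = "eig_v U sig" and ?K = "R * real t / sqrt lam"
  have u: "norm ?u \<le> (real t - 1) * R / sqrt lam" and v: "norm ?v \<le> R / sqrt lam"
    using aioli_eig_norms_le[OF assms(1-4,6,7)] by auto
  note \<gamma> = aioli_step_size[OF assms(1,9) norm_ge_zero v]
  have "norm (gd_iter (Omega ?u ?v) \<gamma> T - argmin (Omega ?u ?v))
      \<le> (1 - 2 * \<gamma>) ^ T * (norm ?u + norm ?v / 2)"
    by (rule gd_iter_Omega_error[OF \<gamma>(1,3)])
  also have "\<dots> \<le> (1 - 2 * \<gamma>) ^ T * ?K"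
    using u v assms(1,2) \<gamma>(4) by (intro mult_left_mono) (simp_all add: field_simps)
  also have "\<dots> \<le> \<epsilon>"
  proof (rule geometric_decay_le)
    have "1 / \<gamma> * ln (?K / \<epsilon>) \<le> real T" using assms(10) by (simp add: \<gamma>(2) mult.commute)
    then show "ln (?K / \<epsilon>) \<le> \<gamma> * real T"
      using \<gamma>(1) by (simp add: pos_divide_le_eq mult.commute)
  qed (use \<gamma> assms(1,2,8) in auto)
  finally show ?thesis .
qed

end
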